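(* Let $\|\cdot\|_W$ be the wedge norm on $\mathbb{R}^p$, with allowed sets $S=\{1,\dots,s\}$, $s\in\{1,\dots,p-1\}$, and associated norms $\Omega^{S^c}$ as in the context. Fix $J\subset\{1,\dots,p\}$ and let $g$ be the gauge norm described in the context. Then $g(\beta)=\|\beta\|_1$ for all $\beta\in\mathbb{R}^p$.
   Context: Let $\mathcal{A}:=\{a\in\mathbb{R}^p: a_j>0 \ \forall j,\ a_1\ge a_2\ge\dots\ge a_p\}$ and $\|\beta\|_W:=\inf_{a\in\mathcal{A}}\frac12\sum_{j=1}^p\big(\beta_j^2/a_j+a_j\big)$. For $S=\{1,\dots,s\}$ let $\mathcal{A}_{S^c}:=\{(a_j)_{j\in S^c}:a\in\mathcal{A}\}$ and $\Omega^{S^c}(\beta_{S^c}):=\inf_{a\in\mathcal{A}_{S^c}}\frac12\sum_{j\in S^c}\big(\beta_j^2/a_j+a_j\big)$; then $\|\beta_S\|_W+\Omega^{S^c}(\beta_{S^c})\le\|\beta\|_W$ for all $\beta$, and $\Upsilon_S(\beta):=\|\beta_S\|_W+\Omega^{S^c}(\beta_{S^c})$. Here $\beta_S$ has entries $\beta_j1\{j\in S\}$. Let $\beta_{f(J)}:=\beta_J-\beta_{J^{c}}$, $\mathrm{flip}_J(B):=\{\beta_{f(J)}:\beta\in B\}$, $\overline{B}:=\bigcup_{S\text{ allowed}}\{\beta:\Upsilon_S(\beta)\le1\}$, $B_g:=\mathrm{Conv}(\overline{B}\cup\mathrm{flip}_J(\overline{B}))$, and $g(x):=\inf\{t>0:x\in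 tB_g\}$. *)

theory Defs
  imports "HOL-Analysis.Analysis"
begin

text \<open>Vectors of R^p are represented as functions nat => real whose support lies in {1..p}.\<close>

definition Rp :: "nat \<Rightarrow> (nat \<Rightarrow> real) set" where
  "Rp p = {\<beta>. \<forall>j. j \<notin> {1..p} \<longrightarrow> \<beta> j = 0}"

definition wedge_cone :: "nat \<Rightarrow> (nat \<Rightarrow> real) set" where
  "wedge_cone p = {a. (\<forall>j\<in>{1..p}. a j > 0) \<and>
                       (\<forall>i j. 1 \<le> i \<longrightarrow> i \<le> j \<longrightarrow> j \<le> p \<longrightarrow> a j \<le> a i)}"

definition wedge_norm :: "nat \<Rightarrow> (nat \<Rightarrow> real) \<Rightarrow> real" where
  "wedge_norm p \<beta> = Inf {(1/2) * (\<Sum>j=1..p. \<beta> j ^ 2 / a j + a j) | a. a \<in> wedge_cone p}"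

definition restr :: "nat set \<Rightarrow> (nat \<Rightarrow> real) \<Rightarrow> (nat \<Rightarrow> real)" where
  "restr S \<beta> = (\<lambda>j. if j \<in> S then \<beta> j else 0)"

text \<open>Omega^{S^c}, S = {1..s}: infimum over A_{S^c} = projections of A onto S^c = {s+1..p}.\<close>
definition Omega_c :: "nat \<Rightarrow> nat \<Rightarrow> (nat \<Rightarrow> real) \<Rightarrow> real" where
  "Omega_c p s \<beta> = Inf {(1/2) * (\<Sum>j\<in>{s+1..p}. \<beta> j ^ 2 / a j + a j) | a. a \<in> wedge_cone p}"

definition Upsilon :: "nat \<Rightarrow> nat \<Rightarrow> (nat \<Rightarrow> real) \<Rightarrow> real" where
  "Upsilon p s \<beta> = wedge_norm p (restr {1..s} \<beta>) + Omega_c p s \<beta>"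

definition flip :: "nat set \<Rightarrow> (nat \<Rightarrow> real) \<Rightarrow> (nat \<Rightarrow> real)" where
  "flip J \<beta> = (\<lambda>j. restr J \<beta> j - restr (- J) \<beta> j)"

text \<open>Allowed sets are S = {1..s}, s in {1..p-1}.\<close>
definition Bbar :: "nat \<Rightarrow> (nat \<Rightarrow> real) set" where
  "Bbar p = (\<Union>s\<in>{1..p-1}. {\<beta> \<in> Rp p. Upsilon p s \<beta> \<le> 1})"

definition conv_comb :: "(nat \<Rightarrow> real) set \<Rightarrow> (nat \<Rightarrow> real) set" where
  "conv_comb X = {y. \<exists>(n::nat) c v. (\<forall>i<n. c i \<ge> 0 \<and> v i \<in> X) \<and> (\<Sum>i<n. c i) = 1 \<and>
                         y = (\<lambda>j. \<Sum>i<n. c i * v i j)}"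

definition Bg :: "nat \<Rightarrow> nat set \<Rightarrow> (nat \<Rightarrow> real) set" where
  "Bg p J = conv_comb (Bbar p \<union> flip J ` Bbar p)"

definition gauge_g :: "nat \<Rightarrow> nat set \<Rightarrow> (nat \<Rightarrow> real) \<Rightarrow> real" where
  "gauge_g p J x = Inf {t. t > 0 \<and> x \<in> (\<lambda>v. (\<lambda>j. t * v j)) ` Bg p J}"

end

theory Submission
  imports Defs
begin

text \<open>Every point of the unit ball B_g has l1-norm at most 1: by the AM-GM inequality
  |b| \<le> (b^2/a + a)/2 each Upsilon_S dominates the l1-norm, the l1-norm is invariant under
  sign flips and its sublevel sets are convex. Conversely every signed unit vector
  \<sigma> e_i with |\<sigma>| \<le> 1 lies in Bbar: take S = {1..i-1} (or S = {1} when i = 1), so that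
  \<sigma> e_i sits at the first coordinate of its block, where the weights a_j = |\<sigma>| + \<delta>
  (j \<le> i), a_j = \<delta> (j > i) are admissible and cost |\<sigma>| + O(\<delta>). Hence B_g is exactly
  the l1 unit ball, whose gauge is the l1-norm.\<close>

definition wedge_cost :: "nat set \<Rightarrow> (nat \<Rightarrow> real) \<Rightarrow> (nat \<Rightarrow> real) \<Rightarrow> real" where
  "wedge_cost A \<beta> a = (1/2) * (\<Sum>j\<in>A. \<beta> j ^ 2 / a j + a j)"

lemma wedge_norm_eq_Inf_cost: "wedge_norm p \<beta> = Inf (wedge_cost {1..p} \<beta> ` wedge_cone p)"
  unfolding wedge_norm_def wedge_cost_def Setcompr_eq_image ..

lemma Omega_c_eq_Inf_cost: "Omega_c p s \<beta> = Inf (wedge_cost {s+1..p} \<beta> ` wedge_cone p)"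
  unfolding Omega_c_def wedge_cost_def Setcompr_eq_image ..

lemma abs_le_half_sq_div_plus:
  fixes a b :: real
  assumes "a > 0"
  shows "\<bar>b\<bar> \<le> (b^2 / a + a) / 2"
proof -
  have "2 * a * \<bar>b\<bar> \<le> b^2 + a^2"
    using sum_squares_bound[of "\<bar>b\<bar>" a] by (simp add: power2_eq_square algebra_simps)
  moreover have "b^2 / a + a = (b^2 + a^2) / a"
    using assms by (simp add: field_simps power2_eq_square)
  ultimately show ?thesis
    using assms by (simp add: field_simps)
qed

lemma const_in_wedge_cone: "(\<delta>::real) > 0 \<Longrightarrow> (\<lambda>_. \<delta>) \<in> wedge_cone p"
  unfolding wedge_cone_def by auto

lemma l1_le_wedge_cost:
  assumes "a \<in> wedge_cone p" "A \<subseteq> {1..p}"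
  shows "(\<Sum>j\<in>A. \<bar>\<beta> j\<bar>) \<le> wedge_cost A \<beta> a"
proof -
  have "(\<Sum>j\<in>A. \<bar>\<beta> j\<bar>) \<le> (\<Sum>j\<in>A. (\<beta> j ^ 2 / a j + a j) / 2)"
  proof (rule sum_mono)
    fix j assume "j \<in> A"
    then have "a j > 0" using assms unfolding wedge_cone_def by auto
    then show "\<bar>\<beta> j\<bar> \<le> (\<beta> j ^ 2 / a j + a j) / 2" by (rule abs_le_half_sq_div_plus)
  qed
  then show ?thesis
    by (simp add: wedge_cost_def sum_divide_distrib)
qed

lemma l1_le_Inf_wedge_cost:
  assumes "A \<subseteq> {1..p}"
  shows "(\<Sum>j\<in>A. \<bar>\<beta> j\<bar>) \<le> Inf (wedge_cost A \<beta> ` wedge_cone p)"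
  using const_in_wedge_cone[of 1 p] l1_le_wedge_cost[OF _ assms]
  by (intro cInf_greatest) auto

lemma Inf_wedge_cost_le:
  assumes "a \<in> wedge_cone p" "A \<subseteq> {1..p}"
  shows "Inf (wedge_cost A \<beta> ` wedge_cone p) \<le> wedge_cost A \<beta> a"
proof (rule cInf_lower)
  have "0 \<le> wedge_cost A \<beta> a'" if "a' \<in> wedge_cone p" for a'
    by (rule order_trans[OF sum_nonneg l1_le_wedge_cost[OF that assms(2)]]) simp
  then show "bdd_below (wedge_cost A \<beta> ` wedge_cone p)"
    by (intro bdd_belowI[of _ 0]) auto
qed (use assms in auto)

lemma l1_le_Upsilon:
  assumes "s \<le> p"
  shows "(\<Sum>j=1..p. \<bar>\<beta> j\<bar>) \<le> Upsilon p s \<beta>"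
proof -
  have split: "{1..p} = {1..s} \<union> {s+1..p}"
    using assms by auto
  have l1_split: "(\<Sum>j=1..p. \<bar>\<gamma> j\<bar>) = (\<Sum>j=1..s. \<bar>\<gamma> j\<bar>) + (\<Sum>j\<in>{s+1..p}. \<bar>\<gamma> j\<bar>)"
    for \<gamma> :: "nat \<Rightarrow> real"
    unfolding split by (rule sum.union_disjoint) auto
  have "(\<Sum>j=1..p. \<bar>\<beta> j\<bar>) = (\<Sum>j=1..p. \<bar>restr {1..s} \<beta> j\<bar>) + (\<Sum>j\<in>{s+1..p}. \<bar>\<beta> j\<bar>)"
    unfolding l1_split[of \<beta>] l1_split[of "restr {1..s} \<beta>"] by (simp add: restr_def)
  also have "\<dots> \<le> wedge_norm p (restr {1..s} \<beta>) + Omega_c p s \<beta>"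
    unfolding wedge_norm_eq_Inf_cost Omega_c_eq_Inf_cost
    by (intro add_mono l1_le_Inf_wedge_cost) auto
  finally show ?thesis
    unfolding Upsilon_def .
qed

lemma l1_le_one_of_Bbar:
  assumes "v \<in> Bbar p"
  shows "(\<Sum>j=1..p. \<bar>v j\<bar>) \<le> 1"
proof -
  obtain s where "s \<in> {1..p-1}" "Upsilon p s v \<le> 1"
    using assms unfolding Bbar_def by blast
  moreover have "s \<le> p"
    using \<open>s \<in> {1..p-1}\<close> by auto
  ultimately show ?thesis
    using l1_le_Upsilon[of s p v] by linarith
qed

lemma abs_flip [simp]: "\<bar>flip J v j\<bar> = \<bar>v j\<bar>"
  by (simp add: flip_def restr_def)

lemma l1_le_one_of_conv_comb:
  assumes "\<And>v. v \<in> X \<Longrightarrow> (\<Sum>j\<in>I. \<bar>v j\<bar>) \<le> 1" and "y \<in> conv_comb X"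
  shows "(\<Sum>j\<in>I. \<bar>y j\<bar>) \<le> 1"
proof -
  obtain n :: nat and c :: "nat \<Rightarrow> real" and v
    where comb: "\<forall>i<n. c i \<ge> 0 \<and> v i \<in> X" "(\<Sum>i<n. c i) = 1"
      and y: "y = (\<lambda>j. \<Sum>i<n. c i * v i j)"
    using assms(2) unfolding conv_comb_def by blast
  have "(\<Sum>j\<in>I. \<bar>y j\<bar>) \<le> (\<Sum>j\<in>I. \<Sum>i<n. c i * \<bar>v i j\<bar>)"
  proof (rule sum_mono)
    fix j
    have "\<bar>\<Sum>i<n. c i * v i j\<bar> \<le> (\<Sum>i<n. \<bar>c i * v i j\<bar>)"
      by (rule sum_abs)
    also have "\<dots> = (\<Sum>i<n. c i * \<bar>v i j\<bar>)"
      using comb(1) by (simp add: abs_mult)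
    finally show "\<bar>y j\<bar> \<le> (\<Sum>i<n. c i * \<bar>v i j\<bar>)"
      unfolding y .
  qed
  also have "\<dots> = (\<Sum>i<n. c i * (\<Sum>j\<in>I. \<bar>v i j\<bar>))"
    by (subst sum.swap) (simp add: sum_distrib_left)
  also have "\<dots> \<le> (\<Sum>i<n. c i)"
  proof (rule sum_mono)
    fix i assume "i \<in> {..<n}"
    then show "c i * (\<Sum>j\<in>I. \<bar>v i j\<bar>) \<le> c i"
      using comb(1) assms(1) by (simp add: mult_left_le)
  qed
  finally show ?thesis
    using comb(2) by simp
qed

lemma l1_le_one_of_Bg:
  assumes "v \<in> Bg p J"
  shows "(\<Sum>j=1..p. \<bar>v j\<bar>) \<le> 1"
proof (rule l1_le_one_of_conv_comb)
  show "v \<in> conv_comb (Bbar p \<union> flip J ` Bbar p)"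
    using assms unfolding Bg_def .
next
  fix u assume "u \<in> Bbar p \<union> flip J ` Bbar p"
  then show "(\<Sum>j=1..p. \<bar>u j\<bar>) \<le> 1"
    by (auto dest: l1_le_one_of_Bbar)
qed

definition unit_vec :: "nat \<Rightarrow> real \<Rightarrow> nat \<Rightarrow> real" where
  "unit_vec i \<sigma> = (\<lambda>j. if j = i then \<sigma> else 0)"

lemma Inf_wedge_cost_unit_vec_le:
  assumes "1 \<le> i" "A \<subseteq> {i..p}"
  shows "Inf (wedge_cost A (unit_vec i \<sigma>) ` wedge_cone p) \<le> (if i \<in> A then \<bar>\<sigma>\<bar> else 0)"
proof (rule field_le_epsilon)
  fix e :: real assume "0 < e"
  define \<delta> where "\<delta> = e / (real p + 1)"
  define a where "a = (\<lambda>j. if j \<le> i then \<bar>\<sigma>\<bar> + \<delta> else \<delta>)"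
  have "\<delta> > 0"
    using \<open>0 < e\<close> by (simp add: \<delta>_def)
  then have a: "a \<in> wedge_cone p"
    by (auto simp: wedge_cone_def a_def)
  have "unit_vec i \<sigma> j ^ 2 / a j + a j \<le> (if j = i then 2 * \<bar>\<sigma>\<bar> else 0) + \<delta>" if "j \<in> A" for j
  proof (cases "j = i")
    case True
    have "\<sigma>^2 \<le> \<bar>\<sigma>\<bar> * (\<bar>\<sigma>\<bar> + \<delta>)"
      using \<open>\<delta> > 0\<close> by (simp add: power2_eq_square algebra_simps)
    then have "\<sigma>^2 / (\<bar>\<sigma>\<bar> + \<delta>) \<le> \<bar>\<sigma>\<bar>"
      using \<open>\<delta> > 0\<close> by (simp add: divide_le_eq add_pos_nonneg)
    then show ?thesis
      using True by (simp add: unit_vec_def a_def)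
  next
    case False
    moreover have "i \<le> j"
      using that assms(2) by auto
    ultimately show ?thesis
      using \<open>\<delta> > 0\<close> by (simp add: unit_vec_def a_def)
  qed
  then have "wedge_cost A (unit_vec i \<sigma>) a \<le> (1/2) * (\<Sum>j\<in>A. (if j = i then 2 * \<bar>\<sigma>\<bar> else 0) + \<delta>)"
    unfolding wedge_cost_def by (intro mult_left_mono sum_mono) auto
  also have "\<dots> = (if i \<in> A then \<bar>\<sigma>\<bar> else 0) + real (card A) * \<delta> / 2"
    using finite_subset[OF assms(2)] by (simp add: sum.distrib)
  also have "real (card A) * \<delta> / 2 \<le> e"
  proof -
    have "card A \<le> p"
      using card_mono[OF _ assms(2)] assms(1) by simp
    then have "real (card A) * \<delta> \<le> (real p + 1) * \<delta>"
      using \<open>\<delta> > 0\<close> by (intro mult_right_mono) auto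
    also have "\<dots> = e"
      by (simp add: \<delta>_def)
    finally show ?thesis
      using \<open>0 < e\<close> by simp
  qed
  finally have "wedge_cost A (unit_vec i \<sigma>) a \<le> (if i \<in> A then \<bar>\<sigma>\<bar> else 0) + e"
    by simp
  moreover have "A \<subseteq> {1..p}"
    using assms by auto
  ultimately show "Inf (wedge_cost A (unit_vec i \<sigma>) ` wedge_cone p) \<le> (if i \<in> A then \<bar>\<sigma>\<bar> else 0) + e"
    using Inf_wedge_cost_le[OF a] by (meson order_trans)
qed

lemma unit_vec_in_Bbar:
  assumes "p \<ge> 2" "i \<in> {1..p}" "\<bar>\<sigma>\<bar> \<le> 1"
  shows "unit_vec i \<sigma> \<in> Bbar p"
proof -
  have "\<exists>s\<in>{1..p-1}. Upsilon p s (unit_vec i \<sigma>) \<le> \<bar>\<sigma>\<bar>"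
  proof (cases "i = 1")
    case True
    have "restr {1..1} (unit_vec i \<sigma>) = unit_vec i \<sigma>"
      using True by (intro ext) (auto simp: restr_def unit_vec_def)
    then have "wedge_norm p (restr {1..1} (unit_vec i \<sigma>)) \<le> \<bar>\<sigma>\<bar>"
      using Inf_wedge_cost_unit_vec_le[of 1 "{1..p}" p \<sigma>] True assms(2)
      by (simp add: wedge_norm_eq_Inf_cost)
    moreover have "Omega_c p 1 (unit_vec i \<sigma>) \<le> 0"
      using Inf_wedge_cost_unit_vec_le[of 1 "{1+1..p}" p \<sigma>] True
      by (simp add: Omega_c_eq_Inf_cost)
    ultimately show ?thesis
      using assms(1) unfolding Upsilon_def by (intro bexI[of _ 1]) auto
  next
    case False
    then have "2 \<le> i"
      using assms(2) by simp
    have "restr {1..i-1} (unit_vec i \<sigma>) = unit_vec 1 0"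
      using \<open>2 \<le> i\<close> by (intro ext) (auto simp: restr_def unit_vec_def)
    then have "wedge_norm p (restr {1..i-1} (unit_vec i \<sigma>)) \<le> 0"
      using Inf_wedge_cost_unit_vec_le[of 1 "{1..p}" p 0]
      by (simp add: wedge_norm_eq_Inf_cost split: if_splits)
    moreover have "Omega_c p (i-1) (unit_vec i \<sigma>) \<le> \<bar>\<sigma>\<bar>"
      using Inf_wedge_cost_unit_vec_le[of i "{i..p}" p \<sigma>] \<open>2 \<le> i\<close> assms(2)
      by (simp add: Omega_c_eq_Inf_cost)
    ultimately show ?thesis
      using \<open>2 \<le> i\<close> assms(2) unfolding Upsilon_def by (intro bexI[of _ "i-1"]) auto
  qed
  moreover have "unit_vec i \<sigma> \<in> Rp p"
    using assms(2) by (auto simp: Rp_def unit_vec_def)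
  ultimately show ?thesis
    using assms(3) unfolding Bbar_def by force
qed

lemma l1_ball_subset_conv_comb:
  assumes units: "\<And>i \<sigma>. i \<in> {1..p} \<Longrightarrow> \<bar>\<sigma>\<bar> \<le> 1 \<Longrightarrow> unit_vec i \<sigma> \<in> X"
    and "1 \<le> p" "y \<in> Rp p" "(\<Sum>j=1..p. \<bar>y j\<bar>) \<le> 1"
  shows "y \<in> conv_comb X"
proof -
  define c where "c = (\<lambda>i. if i = 0 then 1 - (\<Sum>j=1..p. \<bar>y j\<bar>) else \<bar>y i\<bar>)"
  define v where "v = (\<lambda>i. if i = 0 then unit_vec 1 0 else unit_vec i (sgn (y i)))"
  have indices: "{..<Suc p} = insert 0 {1..p}"
    by auto
  have "c i \<ge> 0 \<and> v i \<in> X" if "i < Suc p" for i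
    using that assms(2,4) by (auto simp: c_def v_def abs_sgn_eq intro!: units)
  moreover have "(\<Sum>i<Suc p. c i) = 1"
    unfolding indices by (simp add: c_def)
  moreover have "y = (\<lambda>j. \<Sum>i<Suc p. c i * v i j)"
  proof
    fix j
    have "(\<Sum>i<Suc p. c i * v i j) = (\<Sum>i\<in>{1..p}. c i * v i j)"
      unfolding indices by (simp add: v_def unit_vec_def)
    also have "\<dots> = (\<Sum>i\<in>{1..p}. if i = j then y j else 0)"
      by (rule sum.cong) (auto simp: c_def v_def unit_vec_def abs_mult_sgn)
    also have "\<dots> = y j"
      using assms(3) by (auto simp: Rp_def sum.delta')
    finally show "y j = (\<Sum>i<Suc p. c i * v i j)" ..
  qed
  ultimately show ?thesis
    unfolding conv_comb_def by blast
qed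

lemma Inf_pos_atLeast:
  fixes L :: real
  assumes "L \<ge> 0"
  shows "Inf {t. 0 < t \<and> L \<le> t} = L"
proof (cases "L = 0")
  case True
  then have "{t. 0 < t \<and> L \<le> t} = {0<..}"
    by auto
  then show ?thesis
    using True by simp
next
  case False
  then have "{t. 0 < t \<and> L \<le> t} = {L..}"
    using assms by auto
  then show ?thesis
    by simp
qed

lemma Inf_dilations_eq_l1:
  assumes "\<And>v. v \<in> B \<Longrightarrow> (\<Sum>j=1..p. \<bar>v j\<bar>) \<le> 1"
    and "\<And>y. y \<in> Rp p \<Longrightarrow> (\<Sum>j=1..p. \<bar>y j\<bar>) \<le> 1 \<Longrightarrow> y \<in> B"
    and "\<beta> \<in> Rp p"
  shows "Inf {t. t > 0 \<and> \<beta> \<in> (\<lambda>v j. t * v j) ` B} = (\<Sum>j=1..p. \<bar>\<beta> j\<bar>)"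
proof -
  let ?L = "\<Sum>j=1..p. \<bar>\<beta> j\<bar>"
  have "\<beta> \<in> (\<lambda>v j. t * v j) ` B \<longleftrightarrow> ?L \<le> t" if "t > 0" for t
  proof
    assume "\<beta> \<in> (\<lambda>v j. t * v j) ` B"
    then obtain v where "v \<in> B" "\<beta> = (\<lambda>j. t * v j)"
      by blast
    then have "?L = t * (\<Sum>j=1..p. \<bar>v j\<bar>)"
      using that by (simp add: abs_mult sum_distrib_left)
    also have "\<dots> \<le> t"
      using assms(1)[OF \<open>v \<in> B\<close>] that by (simp add: mult_left_le)
    finally show "?L \<le> t" .
  next
    assume "?L \<le> t"
    define y where "y = (\<lambda>j. \<beta> j / t)"
    have "(\<Sum>j=1..p. \<bar>y j\<bar>) = ?L / t"
      using that by (simp add: y_def sum_divide_distrib)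
    also have "\<dots> \<le> 1"
      using \<open>?L \<le> t\<close> that by simp
    finally have "y \<in> B"
      using assms(2,3) by (auto simp: y_def Rp_def)
    moreover have "\<beta> = (\<lambda>j. t * y j)"
      using that by (simp add: y_def)
    ultimately show "\<beta> \<in> (\<lambda>v j. t * v j) ` B"
      by blast
  qed
  then have "{t. t > 0 \<and> \<beta> \<in> (\<lambda>v j. t * v j) ` B} = {t. 0 < t \<and> ?L \<le> t}"
    by blast
  then show ?thesis
    by (simp add: Inf_pos_atLeast sum_nonneg)
qed

theorem lemma6:
  fixes p :: nat and J :: "nat set" and \<beta> :: "nat \<Rightarrow> real"
  assumes "p \<ge> 2" and "J \<subseteq> {1..p}" and "\<beta> \<in> Rp p"
  shows "gauge_g p J \<beta> = (\<Sum>j=1..p. \<bar>\<beta> j\<bar>)"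
  unfolding gauge_g_def
proof (rule Inf_dilations_eq_l1[OF l1_le_one_of_Bg _ assms(3)])
  fix y assume "y \<in> Rp p" "(\<Sum>j=1..p. \<bar>y j\<bar>) \<le> 1"
  then show "y \<in> Bg p J"
    unfolding Bg_def using assms(1)
    by (intro l1_ball_subset_conv_comb) (auto intro: unit_vec_in_Bbar)
qed

end
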